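(* Fix $i_1,\dots,i_m\in\{1,\dots,n\}$ and integers $a,r,t\ge0$, $s\ge1$ with $2a+s+r+t=m$. If $r=0$, then $$\operatorname{ad}(X)\big([\eta^ax^s\partial^t;i_1,\dots,i_m]\big)=\tfrac{\sqrt{-1}}{\sqrt2}\,[\eta^ax^{s-1}\gamma\,\partial^t;i_1,\dots,i_m],$$ and if $r=1$, then $$\operatorname{ad}(X)\big([\eta^ax^s\gamma\,\partial^t;i_1,\dots,i_m]\big)=\tfrac{2\sqrt{-1}(a+1)}{\sqrt2}[\eta^{a+1}x^{s-1}\partial^t;i_1,\dots,i_m]+\tfrac{2\sqrt{-1}(t+1)}{\sqrt2}[\eta^ax^s\partial^{t+1};i_1,\dots,i_m].$$
   Context: Fix $n\ge1$ and an invertible complex matrix $\eta=(\eta^{ij})$ with $\eta^{ij}=\eta^{ji}$. $W(2n|n)$ is the associative superalgebra generated by even $x^1,\dots,x^n,\partial_1,\dots,\partial_n$ and odd $\gamma^1,\dots,\gamma^n$ with relations $x^ix^j=x^jx^i$, $\partial_i\partial_j=\partial_j\partial_i$, $\partial_ix^j-x^j\partial_i=\delta_i^j$, $\gamma^i$ commuting with all $x^j,\partial_j$, $\gamma^i\gamma^j+\gamma^j\gamma^i=2\eta^{ij}$; $\partial^i:=\eta^{ij}\partial_j$ (summed). $X=\frac{\sqrt{-1}}{\sqrt2}\gamma^i\partial_i$ and $\operatorname{ad}(X)(b)=Xb-(-1)^{|b|}bX$ for homogeneous $b$ (supercommutator). Bracket symbol: for integers $a,p,q,t\ge0$ with $2a+p+q+t=m$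 (exponents of $\eta,x,\gamma,\partial$) and indices $i_1,\dots,i_m$, for $\sigma\in S_m$ put $T_\sigma:=\prod_{k=0}^{a-1}\eta^{i_{\sigma(2k+1)}i_{\sigma(2k+2)}}\cdot x^{i_{\sigma(2a+1)}}\cdots x^{i_{\sigma(2a+p)}}\cdot\gamma^{i_{\sigma(2a+p+1)}}\cdots\gamma^{i_{\sigma(2a+p+q)}}\cdot\partial^{i_{\sigma(2a+p+q+1)}}\cdots\partial^{i_{\sigma(m)}}$ and $[\eta^ax^p\gamma^q\partial^t;i_1,\dots,i_m]:=\frac1{2^a a!p!t!}\sum_{\sigma\in S_m}T_\sigma$ (factors with exponent $0$ omitted; the symbol is $0$ if the exponent of $x$ is negative). *)

theory Defs
  imports Complex_Main "HOL-Combinatorics.Permutations"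
begin

text \<open>A complex (associative, unital) algebra is a ring 'a together with a central
  unital ring homomorphism sc from the complex numbers (scalar multiplication is
  z.b = sc z * b).\<close>
definition complex_alg_hom :: "(complex \<Rightarrow> 'a::ring_1) \<Rightarrow> bool" where
  "complex_alg_hom sc \<longleftrightarrow>
     sc 1 = 1 \<and> (\<forall>z w. sc (z + w) = sc z + sc w) \<and> (\<forall>z w. sc (z * w) = sc z * sc w)
     \<and> (\<forall>z b. sc z * b = b * sc z)"

definition sym_invertible :: "nat \<Rightarrow> (nat \<Rightarrow> nat \<Rightarrow> complex) \<Rightarrow> bool" where
  "sym_invertible n eta \<longleftrightarrow>
     (\<forall>i\<in>{1..n}. \<forall>j\<in>{1..n}. eta i j = eta j i) \<and>
     (\<exists>zeta. \<forall>i\<in>{1..n}. \<forall>k\<in>{1..n}.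
        (\<Sum>j\<in>{1..n}. eta i j * zeta j k) = (if i = k then 1 else 0) \<and>
        (\<Sum>j\<in>{1..n}. zeta i j * eta j k) = (if i = k then 1 else 0))"

text \<open>Elements x^i, d_i (= partial_i), g^i (= gamma^i), i in 1..n, of a complex algebra
  satisfying the defining relations of W(2n|n).\<close>
definition weyl_clifford_rels ::
  "nat \<Rightarrow> (nat \<Rightarrow> nat \<Rightarrow> complex) \<Rightarrow> (complex \<Rightarrow> 'a::ring_1) \<Rightarrow>
   (nat \<Rightarrow> 'a) \<Rightarrow> (nat \<Rightarrow> 'a) \<Rightarrow> (nat \<Rightarrow> 'a) \<Rightarrow> bool" where
  "weyl_clifford_rels n eta sc x d g \<longleftrightarrow>
     (\<forall>i\<in>{1..n}. \<forall>j\<in>{1..n}.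
        x i * x j = x j * x i \<and>
        d i * d j = d j * d i \<and>
        d i * x j - x j * d i = (if i = j then 1 else 0) \<and>
        g i * x j = x j * g i \<and>
        g i * d j = d j * g i \<and>
        g i * g j + g j * g i = sc (2 * eta i j))"

definition dup :: "nat \<Rightarrow> (nat \<Rightarrow> nat \<Rightarrow> complex) \<Rightarrow> (complex \<Rightarrow> 'a::ring_1) \<Rightarrow>
   (nat \<Rightarrow> 'a) \<Rightarrow> nat \<Rightarrow> 'a" where
  "dup n eta sc d i = (\<Sum>j\<in>{1..n}. sc (eta i j) * d j)"

definition Xop :: "nat \<Rightarrow> (complex \<Rightarrow> 'a::ring_1) \<Rightarrow> (nat \<Rightarrow> 'a) \<Rightarrow> (nat \<Rightarrow> 'a) \<Rightarrow> 'a" where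
  "Xop n sc d g = sc (\<i> / complex_of_real (sqrt 2)) * (\<Sum>i\<in>{1..n}. g i * d i)"

text \<open>Supercommutator ad(X)(b) = Xb - (-1)^|b| bX for b homogeneous of parity par.\<close>
definition sad :: "'a::ring_1 \<Rightarrow> 'a \<Rightarrow> nat \<Rightarrow> 'a" where
  "sad X b par = X * b - (-1) ^ par * b * X"

text \<open>The summand T_sigma; indices i_1..i_m are idx 1, ..., idx m, and m = 2a+p+q+t.\<close>
definition Tsig :: "nat \<Rightarrow> (nat \<Rightarrow> nat \<Rightarrow> complex) \<Rightarrow> (complex \<Rightarrow> 'a::ring_1) \<Rightarrow>
   (nat \<Rightarrow> 'a) \<Rightarrow> (nat \<Rightarrow> 'a) \<Rightarrow> (nat \<Rightarrow> 'a) \<Rightarrow>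
   nat \<Rightarrow> nat \<Rightarrow> nat \<Rightarrow> nat \<Rightarrow> (nat \<Rightarrow> nat) \<Rightarrow> (nat \<Rightarrow> nat) \<Rightarrow> 'a" where
  "Tsig n eta sc x d g a p q t idx \<sigma> =
     prod_list (map (\<lambda>k. sc (eta (idx (\<sigma> (2*k+1))) (idx (\<sigma> (2*k+2))))) [0..<a]) *
     prod_list (map (\<lambda>k. x (idx (\<sigma> k))) [2*a+1..<2*a+p+1]) *
     prod_list (map (\<lambda>k. g (idx (\<sigma> k))) [2*a+p+1..<2*a+p+q+1]) *
     prod_list (map (\<lambda>k. dup n eta sc d (idx (\<sigma> k))) [2*a+p+q+1..<2*a+p+q+t+1])"

text \<open>The bracket symbol [eta^a x^p gamma^q partial^t; i_1,...,i_m], m = 2a+p+q+t.\<close>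
definition bracket :: "nat \<Rightarrow> (nat \<Rightarrow> nat \<Rightarrow> complex) \<Rightarrow> (complex \<Rightarrow> 'a::ring_1) \<Rightarrow>
   (nat \<Rightarrow> 'a) \<Rightarrow> (nat \<Rightarrow> 'a) \<Rightarrow> (nat \<Rightarrow> 'a) \<Rightarrow>
   nat \<Rightarrow> nat \<Rightarrow> nat \<Rightarrow> nat \<Rightarrow> (nat \<Rightarrow> nat) \<Rightarrow> 'a" where
  "bracket n eta sc x d g a p q t idx =
     sc (1 / (2 ^ a * fact a * fact p * fact t)) *
     (\<Sum>\<sigma> | \<sigma> permutes {1..2*a+p+q+t}. Tsig n eta sc x d g a p q t idx \<sigma>)"

end

theory Submission
  imports Defs
begin

text \<open>
  Write \<open>X = c D\<close> with \<open>c = \<surd>-1/\<surd>2\<close> and \<open>D = \<Sum>\<^sub>i \<gamma>\<^sup>i \<partial>\<^sub>i\<close>. In \<open>W(2n|n)\<close>, \<open>D\<close> commutes with scalars and with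
  every \<open>\<partial>\<^sub>j\<close> (hence every \<open>\<partial>\<^sup>j\<close>), while \<open>[D, x\<^sup>j] = \<gamma>\<^sup>j\<close> and \<open>D \<gamma>\<^sup>j + \<gamma>\<^sup>j D = 2 \<partial>\<^sup>j\<close>. So \<open>ad(X)\<close>
  acts on each summand \<open>T\<^sub>\<sigma>\<close> of a bracket symbol as a superderivation.

  If \<open>r = 0\<close>, it replaces one \<open>x\<close>-factor at a time by \<open>\<gamma>\<close>. Moving that \<open>\<gamma>\<close> into the \<open>\<gamma>\<close>-slot is a
  relabelling of positions by a cycle, so after reindexing the sum over \<open>S\<^sub>m\<close> each of the \<open>s\<close>
  positions contributes the same sum, and \<open>s/s! = 1/(s-1)!\<close>.

  If \<open>r = 1\<close>, the \<open>\<gamma>\<close>-factor \<open>\<gamma>\<^sup>j\<close> contributes \<open>2\<partial>\<^sup>j\<close>, which gives the second term. Replacing an \<open>x\<^sup>k\<close>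
  by \<open>\<gamma>\<^sup>k\<close> leaves \<open>\<gamma>\<^sup>k \<gamma>\<^sup>j\<close>; averaging over the transposition of the two positions turns it
  into \<open>\<eta>\<^sup>k\<^sup>j\<close> by the Clifford relation, i.e. into a new \<open>\<eta>\<close>-pair, which gives the first term.
\<close>

definition seg_prod :: "('b \<Rightarrow> 'a::monoid_mult) \<Rightarrow> (nat \<Rightarrow> 'b) \<Rightarrow> nat \<Rightarrow> nat \<Rightarrow> 'a" where
  "seg_prod h f lo hi = prod_list (map (\<lambda>l. h (f l)) [lo..<hi])"

lemma seg_prod_empty [simp]: "seg_prod h f k k = 1"
  by (simp add: seg_prod_def)

lemma seg_prod_single [simp]: "seg_prod h f k (Suc k) = h (f k)"
  by (simp add: seg_prod_def)

lemma seg_prod_Cons: "lo < hi \<Longrightarrow> seg_prod h f lo hi = h (f lo) * seg_prod h f (Suc lo) hi"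
  by (simp add: seg_prod_def upt_conv_Cons)

lemma seg_prod_split:
  assumes "lo \<le> k" "k \<le> hi"
  shows "seg_prod h f lo hi = seg_prod h f lo k * seg_prod h f k hi"
proof -
  have "[lo..<hi] = [lo..<k] @ [k..<hi]"
    using assms upt_add_eq_append[of lo k "hi - k"] by simp
  then show ?thesis by (simp add: seg_prod_def)
qed

lemma seg_prod_reindex:
  assumes "hi - lo = hi' - lo'" "\<And>i. i < hi - lo \<Longrightarrow> f (lo + i) = f' (lo' + i)"
  shows "seg_prod h f lo hi = seg_prod h f' lo' hi'"
proof -
  have "map (\<lambda>l. h (f' l)) [lo'..<hi'] = map (\<lambda>l. h (f l)) [lo..<hi]"
    using assms by (intro map_upt_eqI) auto
  then show ?thesis by (simp add: seg_prod_def)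
qed

lemma seg_prod_commute:
  assumes "\<And>l. lo \<le> l \<Longrightarrow> l < hi \<Longrightarrow> h (f l) * y = y * h (f l)"
  shows "seg_prod h f lo hi * y = y * seg_prod h f lo hi"
  using assms unfolding seg_prod_def
proof (induction hi)
  case (Suc hi)
  show ?case
  proof (cases "lo \<le> hi")
    case True
    have "prod_list (map (\<lambda>l. h (f l)) [lo..<Suc hi]) * y
        = prod_list (map (\<lambda>l. h (f l)) [lo..<hi]) * (h (f hi) * y)"
      using True by (simp add: mult.assoc)
    also have "\<dots> = (prod_list (map (\<lambda>l. h (f l)) [lo..<hi]) * y) * h (f hi)"
      using Suc.prems[of hi] True by (simp add: mult.assoc)
    also have "\<dots> = y * prod_list (map (\<lambda>l. h (f l)) [lo..<Suc hi])"
      using Suc True by (simp add: mult.assoc)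
    finally show ?thesis .
  qed simp
qed simp

lemma seg_prod_commutator:
  fixes D :: "'a::semiring_1"
  assumes "\<And>l. lo \<le> l \<Longrightarrow> l < hi \<Longrightarrow> D * h (f l) = h (f l) * D + z l"
  shows "D * seg_prod h f lo hi = seg_prod h f lo hi * D
    + (\<Sum>k = lo..<hi. seg_prod h f lo k * z k * seg_prod h f (Suc k) hi)"
  using assms
proof (induction hi)
  case (Suc hi)
  show ?case
  proof (cases "lo \<le> hi")
    case True
    have split: "seg_prod h f k (Suc hi) = seg_prod h f k hi * h (f hi)" if "k \<le> hi" for k
      using seg_prod_split[OF that, of "Suc hi"] by simp
    have "D * seg_prod h f lo (Suc hi) = (D * seg_prod h f lo hi) * h (f hi)"
      using True by (simp add: split mult.assoc)
    also have "\<dots> = seg_prod h f lo hi * (h (f hi) * D + z hi)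
        + (\<Sum>k = lo..<hi. seg_prod h f lo k * z k * seg_prod h f (Suc k) hi) * h (f hi)"
      using Suc True by (simp add: distrib_right mult.assoc)
    also have "\<dots> = seg_prod h f lo (Suc hi) * D
        + (\<Sum>k = lo..<Suc hi. seg_prod h f lo k * z k * seg_prod h f (Suc k) (Suc hi))"
      using True by (simp add: split distrib_left sum_distrib_right mult.assoc add_ac)
    finally show ?thesis .
  qed (simp add: seg_prod_def)
qed (simp add: seg_prod_def)

text \<open>\<open>f \<circ> cyclic_shift k e\<close> moves the entry of \<open>f\<close> at position \<open>k\<close> to position \<open>e\<close>
  and shifts the entries at \<open>k+1..e\<close> down by one.\<close>

definition cyclic_shift :: "nat \<Rightarrow> nat \<Rightarrow> nat \<Rightarrow> nat" where
  "cyclic_shift k e l = (if k \<le> l \<and> l < e then Suc l else if l = e then k else l)"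

lemma cyclic_shift_permutes:
  assumes "1 \<le> k" "k \<le> e" "e \<le> m"
  shows "cyclic_shift k e permutes {1..m}"
proof (rule inj_imp_permutes)
  show "inj_on (cyclic_shift k e) {1..m}"
    unfolding inj_on_def cyclic_shift_def using assms by auto
qed (use assms in \<open>auto simp: cyclic_shift_def\<close>)

text \<open>\<open>f \<circ> pull_pair p k h\<close> puts the entries of \<open>f\<close> at positions \<open>k < h\<close> into
  positions \<open>p, p+1\<close> and shifts the other entries at \<open>p..h\<close> up to fill \<open>p+2..h\<close>.\<close>

definition pull_pair :: "nat \<Rightarrow> nat \<Rightarrow> nat \<Rightarrow> nat \<Rightarrow> nat" where
  "pull_pair p k h l =
     (if l = p then k else if l = Suc p then h
      else if p + 2 \<le> l \<and> l < k + 2 then l - 2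
      else if k + 2 \<le> l \<and> l \<le> h then l - 1 else l)"

lemma pull_pair_permutes:
  assumes "1 \<le> p" "p \<le> k" "k < h" "h \<le> m"
  shows "pull_pair p k h permutes {1..m}"
proof (rule inj_imp_permutes)
  show "inj_on (pull_pair p k h) {1..m}"
    unfolding inj_on_def pull_pair_def using assms by auto
qed (use assms in \<open>auto simp: pull_pair_def\<close>)

lemma sum_permutations_compose_right_sum:
  assumes "\<And>k. k \<in> K \<Longrightarrow> \<pi> k permutes S"
  shows "(\<Sum>k\<in>K. \<Sum>\<sigma> | \<sigma> permutes S. F (\<sigma> \<circ> \<pi> k))
    = of_nat (card K) * (\<Sum>\<sigma> | \<sigma> permutes S. F \<sigma> :: 'a::semiring_1)"
proof -
  have "(\<Sum>k\<in>K. \<Sum>\<sigma> | \<sigma> permutes S. F (\<sigma> \<circ> \<pi> k)) = (\<Sum>k\<in>K. \<Sum>\<sigma> | \<sigma> permutes S. F \<sigma>)"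
    by (rule sum.cong[OF refl], rule sum_permutations_compose_right[symmetric]) (rule assms)
  then show ?thesis by (simp add: of_nat_mult)
qed

lemma permutes_comp_image_subset:
  assumes "\<sigma> permutes S" "idx ` S \<subseteq> T"
  shows "(idx \<circ> \<sigma>) ` S \<subseteq> T"
  using assms by (metis image_comp permutes_image)

locale weyl_clifford =
  fixes n :: nat and eta :: "nat \<Rightarrow> nat \<Rightarrow> complex" and sc :: "complex \<Rightarrow> 'a::ring_1"
    and x d g :: "nat \<Rightarrow> 'a"
  assumes alg_hom: "complex_alg_hom sc"
    and rels: "weyl_clifford_rels n eta sc x d g"
    and eta_sym: "\<And>i j. i \<in> {1..n} \<Longrightarrow> j \<in> {1..n} \<Longrightarrow> eta i j = eta j i"
begin

lemma sc_central: "sc z * b = b * sc z"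
  and sc_add: "sc (z + w) = sc z + sc w"
  and sc_mult: "sc (z * w) = sc z * sc w"
  and sc_1: "sc 1 = 1"
  using alg_hom unfolding complex_alg_hom_def by blast+

lemma sc_of_nat: "sc (of_nat k) = of_nat k"
proof (induction k)
  case 0
  have "sc 0 + sc 0 = sc 0 + 0" using sc_add[of 0 0] by simp
  then show ?case by simp
qed (simp add: sc_add sc_1)

lemma sc_mult_assoc: "sc z * (sc w * b) = sc (z * w) * b"
  by (simp add: sc_mult mult.assoc)

lemma sc_2: "sc 2 = 2"
  using sc_of_nat[of 2] by simp

lemma double_cancel:
  fixes y z :: 'a
  assumes "2 * y = 2 * z"
  shows "y = z"
proof -
  have half: "sc (1/2) * 2 = 1"
    using sc_mult[of "1/2" 2] sc_2 sc_1 by simp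
  from assms have "(sc (1/2) * 2) * y = (sc (1/2) * 2) * z" by (simp only: mult.assoc)
  then show "y = z" by (simp only: half mult_1_left)
qed

lemma
  assumes "i \<in> {1..n}" "j \<in> {1..n}"
  shows d_commute: "d i * d j = d j * d i"
    and d_x: "d i * x j = x j * d i + (if i = j then 1 else 0)"
    and g_x_commute: "g i * x j = x j * g i"
    and g_d_commute: "g i * d j = d j * g i"
    and g_anticommute: "g i * g j + g j * g i = sc (2 * eta i j)"
  using rels assms unfolding weyl_clifford_rels_def by (auto simp: diff_eq_eq add.commute)

abbreviation d_up :: "nat \<Rightarrow> 'a" where
  "d_up \<equiv> dup n eta sc d"

definition dirac :: 'a where
  "dirac = (\<Sum>i\<in>{1..n}. g i * d i)"

lemma dirac_sc_commute: "dirac * sc z = sc z * dirac"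
  by (simp add: sc_central)

lemma dirac_d_commute:
  assumes "j \<in> {1..n}"
  shows "dirac * d j = d j * dirac"
proof -
  have "g i * d i * d j = d j * (g i * d i)" if "i \<in> {1..n}" for i
    using that assms by (metis mult.assoc d_commute g_d_commute)
  then show ?thesis
    unfolding dirac_def sum_distrib_left sum_distrib_right by (intro sum.cong) auto
qed

lemma dirac_d_up_commute:
  assumes "j \<in> {1..n}"
  shows "dirac * d_up j = d_up j * dirac"
proof -
  have "dirac * (sc (eta j l) * d l) = sc (eta j l) * d l * dirac" if "l \<in> {1..n}" for l
    using that by (metis mult.assoc dirac_sc_commute dirac_d_commute)
  then show ?thesis
    unfolding dup_def sum_distrib_left sum_distrib_right by (intro sum.cong) auto
qed

lemma dirac_x:
  assumes "j \<in> {1..n}"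
  shows "dirac * x j = x j * dirac + g j"
proof -
  have "g i * d i * x j = x j * (g i * d i) + (if i = j then g j else 0)" if "i \<in> {1..n}" for i
  proof -
    have "g i * d i * x j = g i * x j * d i + (if i = j then g j else 0)"
      using that assms by (simp add: d_x distrib_left mult.assoc)
    then show ?thesis
      using g_x_commute[OF that assms] by (simp add: mult.assoc)
  qed
  then have "dirac * x j = (\<Sum>i\<in>{1..n}. x j * (g i * d i) + (if i = j then g j else 0))"
    unfolding dirac_def sum_distrib_right by (intro sum.cong) auto
  also have "\<dots> = x j * dirac + g j"
    using assms by (simp add: dirac_def sum.distrib sum_distrib_left)
  finally show ?thesis .
qed

lemma dirac_g:
  assumes "j \<in> {1..n}"
  shows "dirac * g j + g j * dirac = 2 * d_up j"
proof -
  have "g i * d i * g j + g j * (g i * d i) = 2 * (sc (eta j i) * d i)" if "i \<in> {1..n}" for i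
  proof -
    have "g i * d i * g j + g j * (g i * d i) = (g i * g j + g j * g i) * d i"
      using g_d_commute[OF assms that, symmetric] by (simp add: distrib_right mult.assoc)
    also have "\<dots> = 2 * (sc (eta j i) * d i)"
      using that assms by (simp add: g_anticommute sc_mult sc_2 eta_sym[of i j] mult.assoc)
    finally show ?thesis .
  qed
  then have "dirac * g j + g j * dirac = (\<Sum>i\<in>{1..n}. 2 * (sc (eta j i) * d i))"
    unfolding dirac_def sum_distrib_right sum_distrib_left sum.distrib[symmetric]
    by (intro sum.cong) auto
  then show ?thesis by (simp add: dup_def sum_distrib_left)
qed

definition eta_block :: "nat \<Rightarrow> (nat \<Rightarrow> nat) \<Rightarrow> 'a" where
  "eta_block a f = prod_list (map (\<lambda>k. sc (eta (f (2*k+1)) (f (2*k+2)))) [0..<a])"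

lemma eta_block_Suc: "eta_block (Suc a) f = eta_block a f * sc (eta (f (2*a+1)) (f (2*a+2)))"
  by (simp add: eta_block_def)

lemma eta_block_central: "eta_block a f * y = y * eta_block a f"
proof (induction a)
  case (Suc a)
  then show ?case by (metis eta_block_Suc mult.assoc sc_central)
qed (simp add: eta_block_def)

lemma eta_block_compose:
  assumes "\<And>l. 1 \<le> l \<Longrightarrow> l \<le> 2*a \<Longrightarrow> \<pi> l = l"
  shows "eta_block a (f \<circ> \<pi>) = eta_block a f"
  unfolding eta_block_def using assms by (intro arg_cong[where f = prod_list] map_cong) auto

definition monomial :: "nat \<Rightarrow> nat \<Rightarrow> nat \<Rightarrow> nat \<Rightarrow> (nat \<Rightarrow> nat) \<Rightarrow> 'a" where
  "monomial a p q t f =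
     eta_block a f * seg_prod x f (2*a+1) (2*a+p+1) * seg_prod g f (2*a+p+1) (2*a+p+q+1)
     * seg_prod d_up f (2*a+p+q+1) (2*a+p+q+t+1)"

lemma Tsig_eq_monomial: "Tsig n eta sc x d g a p q t idx \<sigma> = monomial a p q t (idx \<circ> \<sigma>)"
  by (simp add: Tsig_def monomial_def eta_block_def seg_prod_def)

lemma bracket_eq_monomial_sum:
  "bracket n eta sc x d g a p q t idx = sc (1 / (2 ^ a * fact a * fact p * fact t))
     * (\<Sum>\<sigma> | \<sigma> permutes {1..2*a+p+q+t}. monomial a p q t (idx \<circ> \<sigma>))"
  by (simp add: bracket_def Tsig_eq_monomial)

lemma dirac_commutator_x_seg:
  assumes "f ` {lo..<hi} \<subseteq> {1..n}"
  shows "dirac * seg_prod x f lo hi = seg_prod x f lo hi * dirac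
    + (\<Sum>k = lo..<hi. seg_prod x f lo k * seg_prod x f (Suc k) hi * g (f k))"
proof -
  have "dirac * seg_prod x f lo hi = seg_prod x f lo hi * dirac
      + (\<Sum>k = lo..<hi. seg_prod x f lo k * g (f k) * seg_prod x f (Suc k) hi)"
    using assms by (intro seg_prod_commutator dirac_x) (auto simp: image_subset_iff)
  moreover have "g (f k) * seg_prod x f (Suc k) hi = seg_prod x f (Suc k) hi * g (f k)"
    if "k \<in> {lo..<hi}" for k
    using that assms by (intro seg_prod_commute[symmetric]) (simp add: image_subset_iff g_x_commute)
  ultimately show ?thesis by (simp add: mult.assoc)
qed

lemma dirac_d_up_seg_commute:
  assumes "f ` {lo..<hi} \<subseteq> {1..n}"
  shows "dirac * seg_prod d_up f lo hi = seg_prod d_up f lo hi * dirac"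
  using assms by (intro seg_prod_commute[symmetric]) (simp add: image_subset_iff dirac_d_up_commute)

lemma monomial_cyclic_shift:
  assumes "2*a+1 \<le> k" "k \<le> 2*a+p+1"
  shows "monomial a p 1 t (f \<circ> cyclic_shift k (2*a+p+1)) = eta_block a f
    * (seg_prod x f (2*a+1) k * seg_prod x f (Suc k) (2*a+p+2) * g (f k))
    * seg_prod d_up f (2*a+p+2) (2*a+p+t+2)"
proof -
  let ?f = "f \<circ> cyclic_shift k (2*a+p+1)"
  have "eta_block a ?f = eta_block a f"
    using assms by (intro eta_block_compose) (auto simp: cyclic_shift_def)
  moreover have "seg_prod x ?f (2*a+1) (2*a+p+1) = seg_prod x ?f (2*a+1) k * seg_prod x ?f k (2*a+p+1)"
    using assms by (intro seg_prod_split)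
  moreover have "seg_prod x ?f (2*a+1) k = seg_prod x f (2*a+1) k"
    by (intro seg_prod_reindex) (use assms in \<open>auto simp: cyclic_shift_def\<close>)
  moreover have "seg_prod x ?f k (2*a+p+1) = seg_prod x f (Suc k) (2*a+p+2)"
    by (intro seg_prod_reindex) (use assms in \<open>auto simp: cyclic_shift_def\<close>)
  moreover have "seg_prod g ?f (2*a+p+1) (2*a+p+1+1) = g (f k)"
    by (simp add: cyclic_shift_def)
  moreover have "seg_prod d_up ?f (2*a+p+1+1) (2*a+p+1+t+1) = seg_prod d_up f (2*a+p+2) (2*a+p+t+2)"
    by (intro seg_prod_reindex) (auto simp: cyclic_shift_def)
  ultimately show ?thesis
    unfolding monomial_def by (simp add: mult.assoc)
qed

lemma dirac_commutator_monomial: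
  assumes "f ` {1..2*a+Suc p+t} \<subseteq> {1..n}"
  shows "dirac * monomial a (Suc p) 0 t f - monomial a (Suc p) 0 t f * dirac
    = (\<Sum>k = 2*a+1..<2*a+p+2. monomial a p 1 t (f \<circ> cyclic_shift k (2*a+p+1)))"
proof -
  define E X Dd S where "E = eta_block a f" and "X = seg_prod x f (2*a+1) (2*a+p+2)"
    and "Dd = seg_prod d_up f (2*a+p+2) (2*a+p+t+2)"
    and "S = (\<Sum>k = 2*a+1..<2*a+p+2.
               seg_prod x f (2*a+1) k * seg_prod x f (Suc k) (2*a+p+2) * g (f k))"
  have M: "monomial a (Suc p) 0 t f = E * X * Dd"
    by (simp add: monomial_def E_def X_def Dd_def)
  have "dirac * Dd = Dd * dirac"
    unfolding Dd_def using assms by (intro dirac_d_up_seg_commute) auto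
  then have right: "E * X * Dd * dirac = E * (X * dirac) * Dd"
    by (metis mult.assoc)
  have "dirac * X = X * dirac + S"
    unfolding X_def S_def using assms by (intro dirac_commutator_x_seg) auto
  then have left: "dirac * (E * X * Dd) = E * (X * dirac + S) * Dd"
    using eta_block_central[of a f dirac] unfolding E_def by (metis mult.assoc)
  have "dirac * monomial a (Suc p) 0 t f - monomial a (Suc p) 0 t f * dirac = E * S * Dd"
    unfolding M left right by (simp add: distrib_left distrib_right)
  also have "\<dots> = (\<Sum>k = 2*a+1..<2*a+p+2.
      E * (seg_prod x f (2*a+1) k * seg_prod x f (Suc k) (2*a+p+2) * g (f k)) * Dd)"
    unfolding S_def by (simp only: sum_distrib_left sum_distrib_right)
  also have "\<dots> = (\<Sum>k = 2*a+1..<2*a+p+2. monomial a p 1 t (f \<circ> cyclic_shift k (2*a+p+1)))"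
    unfolding E_def Dd_def by (rule sum.cong[OF refl], rule monomial_cyclic_shift[symmetric]) auto
  finally show ?thesis .
qed

text \<open>The summand of \<open>{D, T}\<close> in which the \<open>x\<close>-factor at position \<open>k\<close> of \<open>T\<close> has been
  replaced by \<open>\<gamma>\<close> and moved next to the \<open>\<gamma>\<close>-factor at position \<open>2a+p+2\<close>.\<close>

definition clifford_term :: "nat \<Rightarrow> nat \<Rightarrow> nat \<Rightarrow> nat \<Rightarrow> (nat \<Rightarrow> nat) \<Rightarrow> 'a" where
  "clifford_term a p t k f =
     eta_block a f * (seg_prod x f (2*a+1) k * seg_prod x f (Suc k) (2*a+p+2))
     * (g (f k) * g (f (2*a+p+2))) * seg_prod d_up f (2*a+p+3) (2*a+p+t+3)"

lemma dirac_anticommutator_monomial: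
  assumes "f ` {1..2*a+Suc p+1+t} \<subseteq> {1..n}"
  shows "dirac * monomial a (Suc p) 1 t f + monomial a (Suc p) 1 t f * dirac
    = 2 * monomial a (Suc p) 0 (Suc t) f + (\<Sum>k = 2*a+1..<2*a+p+2. clifford_term a p t k f)"
proof -
  define h where "h = 2*a+p+2"
  define E X G Dt S where "E = eta_block a f" and "X = seg_prod x f (2*a+1) h"
    and "G = g (f h)" and "Dt = seg_prod d_up f (Suc h) (2*a+p+t+3)"
    and "S = (\<Sum>k = 2*a+1..<h. seg_prod x f (2*a+1) k * seg_prod x f (Suc k) h * g (f k))"
  have M: "monomial a (Suc p) 1 t f = E * X * G * Dt"
    by (simp add: monomial_def E_def X_def G_def Dt_def h_def numeral_3_eq_3)
  have "seg_prod d_up f h (2*a+p+t+3) = d_up (f h) * Dt"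
    unfolding Dt_def h_def by (rule seg_prod_Cons) simp
  then have M': "monomial a (Suc p) 0 (Suc t) f = E * X * (d_up (f h) * Dt)"
    by (simp add: monomial_def E_def X_def h_def numeral_3_eq_3)
  have fh: "f h \<in> {1..n}"
    using assms by (auto simp: h_def image_subset_iff)
  have "dirac * Dt = Dt * dirac"
    unfolding Dt_def using assms by (intro dirac_d_up_seg_commute) (auto simp: h_def)
  then have right: "E * X * G * Dt * dirac = E * X * (G * dirac) * Dt"
    by (metis mult.assoc)
  have "dirac * (E * X * G * Dt) = E * (dirac * X) * G * Dt"
    using eta_block_central[of a f dirac] unfolding E_def by (metis mult.assoc)
  also have "dirac * X = X * dirac + S"
    unfolding X_def S_def using assms by (intro dirac_commutator_x_seg) (auto simp: h_def)
  finally have left: "dirac * (E * X * G * Dt) = E * X * (dirac * G) * Dt + E * S * G * Dt"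
    by (simp add: distrib_left distrib_right mult.assoc)
  have "dirac * monomial a (Suc p) 1 t f + monomial a (Suc p) 1 t f * dirac
      = E * X * (dirac * G + G * dirac) * Dt + E * S * G * Dt"
    unfolding M left right by (simp add: distrib_left distrib_right)
  also have "E * X * (dirac * G + G * dirac) * Dt = 2 * monomial a (Suc p) 0 (Suc t) f"
    unfolding M' G_def dirac_g[OF fh] by (simp add: mult_2 distrib_left distrib_right mult.assoc)
  also have "E * S * G * Dt = (\<Sum>k = 2*a+1..<2*a+p+2. clifford_term a p t k f)"
    unfolding S_def sum_distrib_left sum_distrib_right
    by (simp add: clifford_term_def E_def G_def Dt_def h_def mult.assoc numeral_3_eq_3)
  finally show ?thesis .
qed

lemma clifford_term_transpose:
  assumes "2*a+1 \<le> k" "k < 2*a+p+2"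
  shows "clifford_term a p t k (f \<circ> transpose k (2*a+p+2)) = eta_block a f
    * (seg_prod x f (2*a+1) k * seg_prod x f (Suc k) (2*a+p+2))
    * (g (f (2*a+p+2)) * g (f k)) * seg_prod d_up f (2*a+p+3) (2*a+p+t+3)"
proof -
  let ?f = "f \<circ> transpose k (2*a+p+2)"
  have "eta_block a ?f = eta_block a f"
    using assms by (intro eta_block_compose) auto
  moreover have "seg_prod x ?f (2*a+1) k = seg_prod x f (2*a+1) k"
    by (intro seg_prod_reindex) (use assms in auto)
  moreover have "seg_prod x ?f (Suc k) (2*a+p+2) = seg_prod x f (Suc k) (2*a+p+2)"
    by (intro seg_prod_reindex) auto
  moreover have "seg_prod d_up ?f (2*a+p+3) (2*a+p+t+3) = seg_prod d_up f (2*a+p+3) (2*a+p+t+3)"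
    by (intro seg_prod_reindex) (use assms in auto)
  ultimately show ?thesis
    by (simp add: clifford_term_def)
qed

lemma monomial_pull_pair:
  assumes "2*a+1 \<le> k" "k < 2*a+p+2"
  shows "monomial (a+1) p 0 t (f \<circ> pull_pair (2*a+1) k (2*a+p+2))
    = eta_block a f * sc (eta (f k) (f (2*a+p+2)))
      * (seg_prod x f (2*a+1) k * seg_prod x f (Suc k) (2*a+p+2))
      * seg_prod d_up f (2*a+p+3) (2*a+p+t+3)"
proof -
  let ?f = "f \<circ> pull_pair (2*a+1) k (2*a+p+2)"
  have "eta_block (Suc a) ?f = eta_block a f * sc (eta (f k) (f (2*a+p+2)))"
    unfolding eta_block_Suc by (subst eta_block_compose) (use assms in \<open>auto simp: pull_pair_def\<close>)
  moreover have "seg_prod x ?f (2*a+3) (2*a+p+3) = seg_prod x ?f (2*a+3) (k+2) * seg_prod x ?f (k+2) (2*a+p+3)"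
    using assms by (intro seg_prod_split) auto
  moreover have "seg_prod x ?f (2*a+3) (k+2) = seg_prod x f (2*a+1) k"
    by (intro seg_prod_reindex) (use assms in \<open>auto simp: pull_pair_def\<close>)
  moreover have "seg_prod x ?f (k+2) (2*a+p+3) = seg_prod x f (Suc k) (2*a+p+2)"
    by (intro seg_prod_reindex) (use assms in \<open>auto simp: pull_pair_def\<close>)
  moreover have "seg_prod d_up ?f (2*a+p+3) (2*a+p+t+3) = seg_prod d_up f (2*a+p+3) (2*a+p+t+3)"
    by (intro seg_prod_reindex) (use assms in \<open>auto simp: pull_pair_def numeral_3_eq_3\<close>)
  ultimately show ?thesis
    by (simp add: monomial_def mult.assoc numeral_3_eq_3)
qed

lemma clifford_term_symmetrize:
  assumes k: "2*a+1 \<le> k" "k < 2*a+p+2" and f: "f k \<in> {1..n}" "f (2*a+p+2) \<in> {1..n}"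
  shows "clifford_term a p t k f + clifford_term a p t k (f \<circ> transpose k (2*a+p+2))
    = 2 * monomial (a+1) p 0 t (f \<circ> pull_pair (2*a+1) k (2*a+p+2))"
proof -
  define E XX Dt \<eta> where "E = eta_block a f"
    and "XX = seg_prod x f (2*a+1) k * seg_prod x f (Suc k) (2*a+p+2)"
    and "Dt = seg_prod d_up f (2*a+p+3) (2*a+p+t+3)" and "\<eta> = sc (eta (f k) (f (2*a+p+2)))"
  have "clifford_term a p t k f + clifford_term a p t k (f \<circ> transpose k (2*a+p+2))
      = E * XX * (g (f k) * g (f (2*a+p+2)) + g (f (2*a+p+2)) * g (f k)) * Dt"
    unfolding clifford_term_transpose[OF k]
    by (simp only: clifford_term_def E_def XX_def Dt_def distrib_left distrib_right)
  also have "g (f k) * g (f (2*a+p+2)) + g (f (2*a+p+2)) * g (f k) = 2 * \<eta>"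
    using f unfolding \<eta>_def by (simp only: g_anticommute sc_mult sc_2)
  also have "E * XX * (2 * \<eta>) * Dt = 2 * (E * \<eta> * XX * Dt)"
  proof -
    have "E * XX * \<eta> * Dt = E * \<eta> * XX * Dt"
      using sc_central[of _ XX] unfolding \<eta>_def by (metis mult.assoc)
    then show ?thesis by (simp add: mult_2 distrib_left distrib_right)
  qed
  finally show ?thesis
    unfolding monomial_pull_pair[OF k] E_def XX_def Dt_def \<eta>_def .
qed

lemma sum_permutations_symmetrize:
  fixes F G :: "(nat \<Rightarrow> nat) \<Rightarrow> 'a"
  assumes "\<tau> permutes S" "\<And>\<sigma>. \<sigma> permutes S \<Longrightarrow> F \<sigma> + F (\<sigma> \<circ> \<tau>) = 2 * G \<sigma>"
  shows "(\<Sum>\<sigma> | \<sigma> permutes S. F \<sigma>) = (\<Sum>\<sigma> | \<sigma> permutes S. G \<sigma>)"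
proof (rule double_cancel)
  have "2 * (\<Sum>\<sigma> | \<sigma> permutes S. F \<sigma>)
      = (\<Sum>\<sigma> | \<sigma> permutes S. F \<sigma>) + (\<Sum>\<sigma> | \<sigma> permutes S. F (\<sigma> \<circ> \<tau>))"
    using sum_permutations_compose_right[OF assms(1), of F] by (simp add: mult_2)
  also have "\<dots> = (\<Sum>\<sigma> | \<sigma> permutes S. 2 * G \<sigma>)"
    unfolding sum.distrib[symmetric] using assms(2) by (intro sum.cong) auto
  finally show "2 * (\<Sum>\<sigma> | \<sigma> permutes S. F \<sigma>) = 2 * (\<Sum>\<sigma> | \<sigma> permutes S. G \<sigma>)"
    by (simp add: sum_distrib_left)
qed

lemma dirac_commutator_monomial_sum:
  assumes "idx ` {1..2*a+Suc p+t} \<subseteq> {1..n}"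
  shows "(\<Sum>\<sigma> | \<sigma> permutes {1..2*a+Suc p+t}.
            dirac * monomial a (Suc p) 0 t (idx \<circ> \<sigma>) - monomial a (Suc p) 0 t (idx \<circ> \<sigma>) * dirac)
    = of_nat (Suc p) * (\<Sum>\<sigma> | \<sigma> permutes {1..2*a+Suc p+t}. monomial a p 1 t (idx \<circ> \<sigma>))"
  (is "?lhs = _")
proof -
  define K where "K = {2*a+1..<2*a+p+2}"
  let ?S = "{1..2*a+Suc p+t}" and ?\<pi> = "\<lambda>k. cyclic_shift k (2*a+p+1)"
  have "?lhs = (\<Sum>\<sigma> | \<sigma> permutes ?S. \<Sum>k\<in>K. monomial a p 1 t (idx \<circ> (\<sigma> \<circ> ?\<pi> k)))"
    unfolding K_def using assms
    by (intro sum.cong refl, subst dirac_commutator_monomial[OF permutes_comp_image_subset[OF _ assms]])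
       (auto simp: o_assoc)
  also have "\<dots> = (\<Sum>k\<in>K. \<Sum>\<sigma> | \<sigma> permutes ?S. monomial a p 1 t (idx \<circ> (\<sigma> \<circ> ?\<pi> k)))"
    by (rule sum.swap)
  also have "\<dots> = of_nat (card K) * (\<Sum>\<sigma> | \<sigma> permutes ?S. monomial a p 1 t (idx \<circ> \<sigma>))"
    by (rule sum_permutations_compose_right_sum, rule cyclic_shift_permutes) (auto simp: K_def)
  finally show ?thesis by (simp add: K_def)
qed

lemma dirac_anticommutator_monomial_sum:
  assumes "idx ` {1..2*a+Suc p+1+t} \<subseteq> {1..n}"
  shows "(\<Sum>\<sigma> | \<sigma> permutes {1..2*a+Suc p+1+t}.
            dirac * monomial a (Suc p) 1 t (idx \<circ> \<sigma>) + monomial a (Suc p) 1 t (idx \<circ> \<sigma>) * dirac)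
    = 2 * (\<Sum>\<sigma> | \<sigma> permutes {1..2*a+Suc p+1+t}. monomial a (Suc p) 0 (Suc t) (idx \<circ> \<sigma>))
      + of_nat (Suc p) * (\<Sum>\<sigma> | \<sigma> permutes {1..2*a+Suc p+1+t}. monomial (a+1) p 0 t (idx \<circ> \<sigma>))"
  (is "?lhs = _")
proof -
  define K h where "K = {2*a+1..<2*a+p+2}" and "h = 2*a+p+2"
  let ?S = "{1..2*a+Suc p+1+t}" and ?\<rho> = "\<lambda>k. pull_pair (2*a+1) k h"
  have "?lhs = (\<Sum>\<sigma> | \<sigma> permutes ?S. 2 * monomial a (Suc p) 0 (Suc t) (idx \<circ> \<sigma>)
                 + (\<Sum>k\<in>K. clifford_term a p t k (idx \<circ> \<sigma>)))"
    unfolding K_def using assms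
    by (intro sum.cong refl, subst dirac_anticommutator_monomial[OF permutes_comp_image_subset[OF _ assms]])
       auto
  also have "\<dots> = 2 * (\<Sum>\<sigma> | \<sigma> permutes ?S. monomial a (Suc p) 0 (Suc t) (idx \<circ> \<sigma>))
      + (\<Sum>k\<in>K. \<Sum>\<sigma> | \<sigma> permutes ?S. clifford_term a p t k (idx \<circ> \<sigma>))"
    by (simp only: sum.distrib sum_distrib_left sum.swap[of _ K])
  also have "(\<Sum>k\<in>K. \<Sum>\<sigma> | \<sigma> permutes ?S. clifford_term a p t k (idx \<circ> \<sigma>))
      = (\<Sum>k\<in>K. \<Sum>\<sigma> | \<sigma> permutes ?S. monomial (a+1) p 0 t (idx \<circ> (\<sigma> \<circ> ?\<rho> k)))"
  proof (rule sum.cong[OF refl], rule sum_permutations_symmetrize)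
    fix k assume "k \<in> K"
    then have k: "2*a+1 \<le> k" "k < h" and S: "k \<in> ?S" "h \<in> ?S"
      by (auto simp: K_def h_def)
    show "transpose k h permutes ?S"
      using S by (rule permutes_swap_id)
    fix \<sigma> assume "\<sigma> permutes ?S"
    then have "(idx \<circ> \<sigma>) ` ?S \<subseteq> {1..n}"
      using assms by (rule permutes_comp_image_subset)
    then show "clifford_term a p t k (idx \<circ> \<sigma>) + clifford_term a p t k (idx \<circ> (\<sigma> \<circ> transpose k h))
        = 2 * monomial (a+1) p 0 t (idx \<circ> (\<sigma> \<circ> ?\<rho> k))"
      using clifford_term_symmetrize[of a k p "idx \<circ> \<sigma>" t] k S unfolding h_def
      by (simp add: o_assoc image_subset_iff)
  qed
  also have "\<dots> = of_nat (card K) * (\<Sum>\<sigma> | \<sigma> permutes ?S. monomial (a+1) p 0 t (idx \<circ> \<sigma>))"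
    by (rule sum_permutations_compose_right_sum, rule pull_pair_permutes) (auto simp: K_def h_def)
  finally show ?thesis by (simp add: K_def comp_def)
qed

lemma dirac_commutator_bracket:
  assumes "idx ` {1..2*a+Suc p+t} \<subseteq> {1..n}"
  shows "dirac * bracket n eta sc x d g a (Suc p) 0 t idx - bracket n eta sc x d g a (Suc p) 0 t idx * dirac
    = bracket n eta sc x d g a p 1 t idx"
proof -
  let ?S = "{1..2*a+Suc p+t}"
  define c :: complex where "c = 1 / (2 ^ a * fact a * fact (Suc p) * fact t)"
  define S0 S1 where "S0 = (\<Sum>\<sigma> | \<sigma> permutes ?S. monomial a (Suc p) 0 t (idx \<circ> \<sigma>))"
    and "S1 = (\<Sum>\<sigma> | \<sigma> permutes ?S. monomial a p 1 t (idx \<circ> \<sigma>))"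
  have coeff: "c * of_nat (Suc p) = 1 / (2 ^ a * fact a * fact p * fact t)"
    by (simp add: c_def field_simps del: of_nat_Suc)
  have B1: "bracket n eta sc x d g a p 1 t idx = sc c * (of_nat (Suc p) * S1)"
    unfolding mult.assoc[symmetric] sc_of_nat[symmetric] sc_mult[symmetric] coeff
    by (simp add: bracket_eq_monomial_sum S1_def)
  have "dirac * (sc c * S0) - sc c * S0 * dirac = sc c * (dirac * S0 - S0 * dirac)"
    by (simp add: right_diff_distrib dirac_sc_commute flip: mult.assoc)
  also have "dirac * S0 - S0 * dirac = (\<Sum>\<sigma> | \<sigma> permutes ?S.
      dirac * monomial a (Suc p) 0 t (idx \<circ> \<sigma>) - monomial a (Suc p) 0 t (idx \<circ> \<sigma>) * dirac)"
    by (simp only: S0_def sum_distrib_left sum_distrib_right sum_subtractf)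
  also have "\<dots> = of_nat (Suc p) * S1"
    unfolding S1_def using assms by (rule dirac_commutator_monomial_sum)
  finally show ?thesis
    unfolding B1 by (simp add: bracket_eq_monomial_sum S0_def c_def)
qed

lemma dirac_anticommutator_bracket:
  assumes "idx ` {1..2*a+Suc p+1+t} \<subseteq> {1..n}"
  shows "dirac * bracket n eta sc x d g a (Suc p) 1 t idx + bracket n eta sc x d g a (Suc p) 1 t idx * dirac
    = sc (2 * of_nat (a + 1)) * bracket n eta sc x d g (a + 1) p 0 t idx
      + sc (2 * of_nat (t + 1)) * bracket n eta sc x d g a (Suc p) 0 (Suc t) idx"
proof -
  let ?S = "{1..2*a+Suc p+1+t}"
  define c :: complex where "c = 1 / (2 ^ a * fact a * fact (Suc p) * fact t)"
  define S0 S2 S3 where "S0 = (\<Sum>\<sigma> | \<sigma> permutes ?S. monomial a (Suc p) 1 t (idx \<circ> \<sigma>))"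
    and "S2 = (\<Sum>\<sigma> | \<sigma> permutes ?S. monomial (a+1) p 0 t (idx \<circ> \<sigma>))"
    and "S3 = (\<Sum>\<sigma> | \<sigma> permutes ?S. monomial a (Suc p) 0 (Suc t) (idx \<circ> \<sigma>))"
  have coeff2: "2 * of_nat (a + 1) * (1 / (2 ^ (a + 1) * fact (a + 1) * fact p * fact t)) = c * of_nat (Suc p)"
    by (simp add: c_def field_simps del: of_nat_Suc)
  have B2: "sc (2 * of_nat (a + 1)) * bracket n eta sc x d g (a + 1) p 0 t idx
      = sc c * (of_nat (Suc p) * S2)"
    unfolding bracket_eq_monomial_sum mult.assoc[symmetric] sc_mult[symmetric] coeff2
    by (simp add: S2_def sc_mult sc_of_nat mult.assoc del: of_nat_Suc)
  have coeff3: "2 * of_nat (t + 1) * (1 / (2 ^ a * fact a * fact (Suc p) * fact (Suc t))) = c * 2"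
    by (simp add: c_def field_simps del: of_nat_Suc)
  have B3: "sc (2 * of_nat (t + 1)) * bracket n eta sc x d g a (Suc p) 0 (Suc t) idx = sc c * (2 * S3)"
    unfolding bracket_eq_monomial_sum mult.assoc[symmetric] sc_mult[symmetric] coeff3
    by (simp add: S3_def sc_mult sc_2 mult.assoc)
  have "dirac * (sc c * S0) + sc c * S0 * dirac = sc c * (dirac * S0 + S0 * dirac)"
    by (simp add: distrib_left dirac_sc_commute flip: mult.assoc)
  also have "dirac * S0 + S0 * dirac = (\<Sum>\<sigma> | \<sigma> permutes ?S.
      dirac * monomial a (Suc p) 1 t (idx \<circ> \<sigma>) + monomial a (Suc p) 1 t (idx \<circ> \<sigma>) * dirac)"
    by (simp only: S0_def sum_distrib_left sum_distrib_right sum.distrib)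
  also have "\<dots> = 2 * S3 + of_nat (Suc p) * S2"
    unfolding S2_def S3_def using assms by (rule dirac_anticommutator_monomial_sum)
  finally show ?thesis
    unfolding B2 B3 by (simp add: bracket_eq_monomial_sum S0_def c_def distrib_left add.commute)
qed

lemma sad_sc_mult: "sad (sc c * y) b par = sc c * (y * b - (-1) ^ par * b * y)"
proof -
  have "(-1) ^ par * b * (sc c * y) = sc c * ((-1) ^ par * b * y)"
    by (metis mult.assoc sc_central)
  then show ?thesis by (simp add: sad_def right_diff_distrib mult.assoc)
qed

end

theorem lemma5p2:
  fixes n m a s r t :: nat
    and eta :: "nat \<Rightarrow> nat \<Rightarrow> complex"
    and sc :: "complex \<Rightarrow> 'a::ring_1"
    and x d g :: "nat \<Rightarrow> 'a"
    and idx :: "nat \<Rightarrow> nat"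
  assumes "n \<ge> 1"
    and "sym_invertible n eta"
    and "complex_alg_hom sc"
    and "weyl_clifford_rels n eta sc x d g"
    and "\<forall>k\<in>{1..m}. idx k \<in> {1..n}"
    and "s \<ge> 1"
    and "2 * a + s + r + t = m"
  shows "(r = 0 \<longrightarrow>
            sad (Xop n sc d g) (bracket n eta sc x d g a s 0 t idx) 0 =
            sc (\<i> / complex_of_real (sqrt 2)) * bracket n eta sc x d g a (s - 1) 1 t idx)
       \<and> (r = 1 \<longrightarrow>
            sad (Xop n sc d g) (bracket n eta sc x d g a s 1 t idx) 1 =
            sc (2 * \<i> * of_nat (a + 1) / complex_of_real (sqrt 2)) *
              bracket n eta sc x d g (a + 1) (s - 1) 0 t idx +
            sc (2 * \<i> * of_nat (t + 1) / complex_of_real (sqrt 2)) *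
              bracket n eta sc x d g a s 0 (t + 1) idx)"
proof -
  interpret weyl_clifford n eta sc x d g
    using assms(2-4) by unfold_locales (auto simp: sym_invertible_def)
  obtain p where s: "s = Suc p"
    using \<open>s \<ge> 1\<close> by (cases s) auto
  have X: "Xop n sc d g = sc (\<i> / complex_of_real (sqrt 2)) * dirac"
    by (simp add: Xop_def dirac_def)
  have idx: "idx ` {1..2 * a + Suc p + r + t} \<subseteq> {1..n}"
    using assms(5,7) s by auto
  show ?thesis
  proof (intro conjI impI)
    assume "r = 0"
    with idx show "sad (Xop n sc d g) (bracket n eta sc x d g a s 0 t idx) 0
        = sc (\<i> / complex_of_real (sqrt 2)) * bracket n eta sc x d g a (s - 1) 1 t idx"
      unfolding X sad_sc_mult s by (simp add: dirac_commutator_bracket)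
  next
    assume "r = 1"
    with idx have "dirac * bracket n eta sc x d g a s 1 t idx + bracket n eta sc x d g a s 1 t idx * dirac
      = sc (2 * of_nat (a + 1)) * bracket n eta sc x d g (a + 1) p 0 t idx
        + sc (2 * of_nat (t + 1)) * bracket n eta sc x d g a s 0 (Suc t) idx"
      unfolding s by (intro dirac_anticommutator_bracket) simp
    then show "sad (Xop n sc d g) (bracket n eta sc x d g a s 1 t idx) 1
        = sc (2 * \<i> * of_nat (a + 1) / complex_of_real (sqrt 2)) * bracket n eta sc x d g (a + 1) (s - 1) 0 t idx
          + sc (2 * \<i> * of_nat (t + 1) / complex_of_real (sqrt 2)) * bracket n eta sc x d g a s 0 (t + 1) idx"
      unfolding X sad_sc_mult by (simp add: s distrib_left sc_mult_assoc field_simps)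
  qed
qed

end
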